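(* In the setting described in the context, for all $c>0$ and all sufficiently large $m$, $$\sum_{i=1}^m\big[1-2\mathsf{Q}(z_i(c))\big]z_i(c)\ \ge\ 0.21\,\frac{q}{m^2}\,\frac{(1+c)^2}{1+c^2}\,\Delta^2.$$
   Context: Two agents $a,b$, $m$ items, utilities $u^a_i,u^b_i\in[0,1]$, additive. For an allocation (partition $(\mathcal{A}_a,\mathcal{A}_b)$ of $[m]$), $\mathrm{Envy}_{a\to b}=\sum_{i\in\mathcal{A}_b}u^a_i-\sum_{i\in\mathcal{A}_a}u^a_i$, $\mathrm{Envy}_{b\to a}=\sum_{i\in\mathcal{A}_a}u^b_i-\sum_{i\in\mathcal{A}_b}u^b_i$, $\mathrm{Envy}=\max$ of the two, and it is assumed that $\min_{\mathcal{A}}\mathrm{Envy}(\mathcal{A})\le-\Delta$, where $\Delta=\Delta(m)$ satisfies $\Delta\ge m^{1/4}\log^2m$ and $\Delta=o(m/\log m)$. The number of queries is $q=m\lceil15\frac{m^{3/2}}{\Delta^2}\log m+\log^2m\rceil$. Define $z_i(c)=\sqrt{\frac{q}{m(1+c^2)}}(cu^a_i-u^b_i)$ and $\mathsf{Q}(z)=\frac1{\sqrt{2\pi}}\int_z^\infty e^{-x^2/2}dx$. $\log$ is natural. *)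

theory Defs
  imports "HOL-Analysis.Analysis" "HOL-Library.Landau_Symbols"
begin

text \<open>Items are indexed by {..<m}. An allocation is given by the bundle S of agent a
  (agent b receives the complement {..<m} - S).\<close>

definition envy_ab :: "nat \<Rightarrow> (nat \<Rightarrow> real) \<Rightarrow> nat set \<Rightarrow> real" where
  "envy_ab m ua S = (\<Sum>i\<in>{..<m} - S. ua i) - (\<Sum>i\<in>S. ua i)"

definition envy_ba :: "nat \<Rightarrow> (nat \<Rightarrow> real) \<Rightarrow> nat set \<Rightarrow> real" where
  "envy_ba m ub S = (\<Sum>i\<in>S. ub i) - (\<Sum>i\<in>{..<m} - S. ub i)"

definition envy :: "nat \<Rightarrow> (nat \<Rightarrow> real) \<Rightarrow> (nat \<Rightarrow> real) \<Rightarrow> nat set \<Rightarrow> real" where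
  "envy m ua ub S = max (envy_ab m ua S) (envy_ba m ub S)"

definition Qfun :: "real \<Rightarrow> real" where
  "Qfun z = (1 / sqrt (2 * pi)) * (LBINT x:{z..}. exp (- (x\<^sup>2) / 2))"

definition nqueries :: "(nat \<Rightarrow> real) \<Rightarrow> nat \<Rightarrow> real" where
  "nqueries D m = real m * real_of_int
     \<lceil>15 * real m powr (3/2) / (D m)\<^sup>2 * ln (real m) + (ln (real m))\<^sup>2\<rceil>"

definition zfun :: "(nat \<Rightarrow> real) \<Rightarrow> nat \<Rightarrow> (nat \<Rightarrow> real) \<Rightarrow> (nat \<Rightarrow> real) \<Rightarrow> real \<Rightarrow> nat \<Rightarrow> real" where
  "zfun D m ua ub c i = sqrt (nqueries D m / (real m * (1 + c\<^sup>2))) * (c * ua i - ub i)"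

end

theory Submission
  imports Defs "HOL-Probability.Distributions" "HOL-Real_Asymp.Real_Asymp"
begin

(* Write g(z) = (1 - 2 Q(z)) z. For z >= 0, 1 - 2 Q(z) is the standard Gaussian mass of
   [-z, z), and the density is at least 1/6 on [-1, 1]; as g is even, this gives
   3 g(z) >= |z| min(|z|, 1). The right-hand side dominates each tangent 2 a |z| - a^2 with
   a <= 1/2, so whenever sum |z_i| >= T and a = T/m <= 1/2, summing the tangents yields
   3 sum g(z_i) >= T^2/m. Weighting Envy_{a->b} by c shows sum |c u^a_i - u^b_i| >= (1 + c) Delta,
   so T = sqrt (q / (m (1 + c^2))) (1 + c) Delta works, and T^2/m is exactly
   q/m^2 (1 + c)^2/(1 + c^2) Delta^2. Finally T <= m/2 for large m because
   q Delta^2 / m = O(m^(3/2) log m + Delta^2 log^2 m) = o(m^2). *)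

lemma integrable_std_normal_density: "integrable lborel std_normal_density"
  using integrable_std_normal_moment[of 0] by simp

lemma integral_std_normal_density: "(LBINT x. std_normal_density x) = 1"
  using integral_std_normal_moment_even[of 0] by simp

lemma set_integrable_std_normal_density:
  "A \<in> sets borel \<Longrightarrow> set_integrable lborel A std_normal_density"
  unfolding set_integrable_def
  using integrable_mult_indicator[OF _ integrable_std_normal_density] by simp

lemma Qfun_eq_set_integral: "Qfun z = (LBINT x:{z..}. std_normal_density x)"
  unfolding Qfun_def std_normal_density_def by simp

lemma Qfun_uminus: "Qfun (- z) = 1 - Qfun z"
proof -
  have "Qfun (- z) = (LBINT x:{..z}. std_normal_density x)"
    unfolding Qfun_eq_set_integral set_integral_reflect[of "{-z..}"]
    by (simp add: std_normal_density_def atMost_def)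
  also have "\<dots> = (LBINT x:{..z} \<union> {z..}. std_normal_density x) - Qfun z"
    unfolding Qfun_eq_set_integral
    by (subst set_integral_Un_AE)
       (auto intro: set_integrable_std_normal_density eventually_mono[OF AE_lborel_singleton[of z]])
  also have "{..z} \<union> {z..} = UNIV"
    by auto
  finally show ?thesis
    by (simp add: set_lebesgue_integral_def integral_std_normal_density)
qed

lemma one_minus_two_Qfun_eq:
  assumes "0 \<le> z"
  shows "1 - 2 * Qfun z = (LBINT x:{-z..<z}. std_normal_density x)"
proof -
  have "{-z..} = {-z..<z} \<union> {z..}"
    using assms by auto
  then have "Qfun (- z) = (LBINT x:{-z..<z} \<union> {z..}. std_normal_density x)"
    by (simp only: Qfun_eq_set_integral)
  also have "\<dots> = (LBINT x:{-z..<z}. std_normal_density x) + Qfun z"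
    unfolding Qfun_eq_set_integral
    by (rule set_integral_Un) (auto simp: set_integrable_std_normal_density)
  finally show ?thesis
    using Qfun_uminus[of z] by simp
qed

lemma std_normal_density_ge_one_sixth:
  assumes "\<bar>x\<bar> \<le> 1"
  shows "1 / 6 \<le> std_normal_density x"
proof -
  have "x\<^sup>2 \<le> 1"
    using assms by (simp add: abs_square_le_1)
  then have "1 / 2 \<le> exp (- x\<^sup>2 / 2)"
    using exp_ge_add_one_self[of "- x\<^sup>2 / 2"] by linarith
  moreover have "sqrt (2 * pi) \<le> 3"
    using pi_less_4 real_sqrt_le_mono[of "2 * pi" "3\<^sup>2"] by simp
  ultimately show ?thesis
    unfolding std_normal_density_def by (simp add: field_simps)
qed

lemma one_minus_two_Qfun_ge:
  assumes "0 \<le> z"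
  shows "min z 1 / 3 \<le> 1 - 2 * Qfun z"
proof -
  define t where "t = min z 1"
  have t: "0 \<le> t" "t \<le> 1" "t \<le> z"
    using assms by (auto simp: t_def)
  have "t / 3 = (LBINT x:{-t..<t}. 1 / 6)"
    using t by (simp add: set_integral_const)
  also have "\<dots> \<le> (LBINT x:{-t..<t}. std_normal_density x)"
    using t by (intro set_integral_mono std_normal_density_ge_one_sixth set_integrable_std_normal_density)
      (auto simp: set_integrable_def)
  also have "\<dots> \<le> (LBINT x:{-t..<t} \<union> ({-z..<z} - {-t..<t}). std_normal_density x)"
    by (subst set_integral_Un)
      (auto simp: set_integrable_std_normal_density set_lebesgue_integral_def intro!: integral_nonneg_AE)
  also have "{-t..<t} \<union> ({-z..<z} - {-t..<t}) = {-z..<z}"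
    using t by auto
  finally show ?thesis
    using assms by (simp add: one_minus_two_Qfun_eq t_def)
qed

lemma one_minus_two_Qfun_mult_ge: "\<bar>z\<bar> * min \<bar>z\<bar> 1 \<le> 3 * ((1 - 2 * Qfun z) * z)"
proof (cases "0 \<le> z")
  case True
  then show ?thesis
    using mult_right_mono[OF one_minus_two_Qfun_ge[OF True] True] by (simp add: algebra_simps)
next
  case False
  have odd: "1 - 2 * Qfun (- z) = - (1 - 2 * Qfun z)"
    using Qfun_uminus[of z] by simp
  have "(1 - 2 * Qfun z) * z = (1 - 2 * Qfun (- z)) * (- z)"
    by (simp only: odd mult_minus_left mult_minus_right minus_minus)
  with False show ?thesis
    using mult_right_mono[OF one_minus_two_Qfun_ge[of "- z"], of "- z"] by simp
qed

lemma tangent_le_abs_mult_min_one: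
  fixes a z :: real
  assumes "0 \<le> a" "a \<le> 1 / 2"
  shows "2 * a * \<bar>z\<bar> - a\<^sup>2 \<le> \<bar>z\<bar> * min \<bar>z\<bar> 1"
proof (cases "\<bar>z\<bar> \<le> 1")
  case True
  have "0 \<le> (\<bar>z\<bar> - a)\<^sup>2"
    by simp
  with True show ?thesis
    by (simp add: min_def power2_eq_square algebra_simps)
next
  case False
  have "2 * a * \<bar>z\<bar> \<le> \<bar>z\<bar>"
    using assms mult_right_mono[of "2 * a" 1 "\<bar>z\<bar>"] by simp
  moreover have "\<bar>z\<bar> * min \<bar>z\<bar> 1 = \<bar>z\<bar>"
    using False by simp
  ultimately show ?thesis
    using zero_le_power2[of a] by linarith
qed

lemma sum_abs_mult_min_one_ge:
  fixes w :: "'a \<Rightarrow> real"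
  assumes "finite I" "0 \<le> T" "T \<le> (\<Sum>i\<in>I. \<bar>w i\<bar>)" "2 * T \<le> card I"
  shows "T\<^sup>2 / card I \<le> (\<Sum>i\<in>I. \<bar>w i\<bar> * min \<bar>w i\<bar> 1)"
proof -
  define a where "a = T / card I"
  have a: "0 \<le> a" "a \<le> 1 / 2"
    using assms by (auto simp: a_def divide_le_eq)
  have "T\<^sup>2 / card I = 2 * a * T - card I * a\<^sup>2"
    using assms by (cases "card I = 0") (auto simp: a_def power2_eq_square field_simps)
  also have "\<dots> \<le> 2 * a * (\<Sum>i\<in>I. \<bar>w i\<bar>) - card I * a\<^sup>2"
    using assms a by (simp add: mult_left_mono)
  also have "\<dots> = (\<Sum>i\<in>I. 2 * a * \<bar>w i\<bar> - a\<^sup>2)"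
    by (simp add: sum_subtractf sum_distrib_left)
  also have "\<dots> \<le> (\<Sum>i\<in>I. \<bar>w i\<bar> * min \<bar>w i\<bar> 1)"
    using a by (intro sum_mono tangent_le_abs_mult_min_one)
  finally show ?thesis .
qed

lemma envy_le_imp_sum_abs_ge:
  fixes ua ub :: "nat \<Rightarrow> real"
  assumes "S \<subseteq> {..<m}" "envy m ua ub S \<le> - d" "0 \<le> c"
  shows "(1 + c) * d \<le> (\<Sum>i<m. \<bar>c * ua i - ub i\<bar>)"
proof -
  define R where "R = {..<m} - S"
  have SR: "finite S" "finite R" "S \<inter> R = {}" "S \<union> R = {..<m}"
    using assms(1) finite_subset by (auto simp: R_def)
  \<comment> \<open>c Envy_{a->b} + Envy_{b->a} is minus a signed sum of the c u^a_i - u^b_i\<close>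
  have "(1 + c) * d \<le> - (c * envy_ab m ua S + envy_ba m ub S)"
    using assms(2,3) mult_left_mono[of "envy_ab m ua S" "- d" c]
    by (simp add: envy_def algebra_simps)
  also have "\<dots> = (\<Sum>i\<in>S. c * ua i - ub i) + (\<Sum>i\<in>R. - (c * ua i - ub i))"
    by (simp add: envy_ab_def envy_ba_def R_def sum_subtractf sum_negf sum_distrib_left[symmetric]
        algebra_simps)
  also have "\<dots> \<le> (\<Sum>i\<in>S. \<bar>c * ua i - ub i\<bar>) + (\<Sum>i\<in>R. \<bar>c * ua i - ub i\<bar>)"
    by (intro add_mono sum_mono) auto
  also have "\<dots> = (\<Sum>i<m. \<bar>c * ua i - ub i\<bar>)"
    using SR by (simp add: sum.union_disjoint[symmetric])
  finally show ?thesis .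
qed

lemma nqueries_nonneg: "0 \<le> nqueries D m"
proof (cases "m = 0")
  case False
  then have "0 \<le> 15 * real m powr (3 / 2) / (D m)\<^sup>2 * ln (real m) + (ln (real m))\<^sup>2"
    by simp
  then show ?thesis
    using order_trans[OF _ le_of_int_ceiling] by (simp add: nqueries_def)
qed (simp add: nqueries_def)

lemma nqueries_div_le:
  "nqueries D m / real m \<le> 15 * real m powr (3 / 2) / (D m)\<^sup>2 * ln (real m) + (ln (real m))\<^sup>2 + 1"
  by (cases "m = 0") (auto simp: nqueries_def of_int_ceiling_le_add_one)

lemma eventually_nqueries_mult_sq_le:
  fixes D :: "nat \<Rightarrow> real"
  assumes "D \<in> o(\<lambda>m. real m / ln (real m))"
  shows "eventually (\<lambda>m. nqueries D m / real m * (D m)\<^sup>2 \<le> (real m)\<^sup>2 / 8) sequentially"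
proof -
  have "eventually (\<lambda>m. 15 * real m powr (3 / 2) * ln (real m) \<le> (real m)\<^sup>2 / 16) sequentially"
    by real_asymp
  moreover have "eventually (\<lambda>m. \<bar>D m\<bar> \<le> 1 / 8 * \<bar>real m / ln (real m)\<bar>) sequentially"
    using landau_o.smallD[OF assms, of "1 / 8"] by simp
  moreover have "eventually (\<lambda>m. 1 \<le> ln (real m)) sequentially"
    by real_asymp
  ultimately show ?thesis
  proof eventually_elim
    case (elim m)
    then have "\<bar>D m\<bar> * ln (real m) \<le> real m / 8"
      by (simp add: field_simps abs_div_pos)
    then have log_term: "(ln (real m))\<^sup>2 * (D m)\<^sup>2 \<le> (real m)\<^sup>2 / 64"
      using power_mono[of "\<bar>D m\<bar> * ln (real m)" "real m / 8" 2] elim(3)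
      by (simp add: power_mult_distrib power_divide mult.commute)
    have D_sq_le: "(D m)\<^sup>2 \<le> (ln (real m))\<^sup>2 * (D m)\<^sup>2"
      using elim(3) mult_right_mono[of 1 "(ln (real m))\<^sup>2" "(D m)\<^sup>2"] by (simp add: one_le_power)
    have "nqueries D m / real m * (D m)\<^sup>2
        \<le> (15 * real m powr (3 / 2) / (D m)\<^sup>2 * ln (real m) + (ln (real m))\<^sup>2 + 1) * (D m)\<^sup>2"
      by (intro mult_right_mono nqueries_div_le) simp
    \<comment> \<open>also when D m = 0, where the division by D m squared yields 0\<close>
    also have "\<dots> \<le> 15 * real m powr (3 / 2) * ln (real m) + 2 * ((ln (real m))\<^sup>2 * (D m)\<^sup>2)"
      using D_sq_le elim(3) by (cases "D m = 0") (simp_all add: algebra_simps)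
    finally show ?case
      using elim(1) log_term zero_le_power2[of "real m"] by linarith
  qed
qed

lemma sum_one_minus_two_Qfun_mult_ge:
  fixes ua ub :: "nat \<Rightarrow> real"
  assumes "0 \<le> c" "0 \<le> D m"
    and "nqueries D m / real m * (D m)\<^sup>2 \<le> (real m)\<^sup>2 / 8"
    and "S \<subseteq> {..<m}" "envy m ua ub S \<le> - D m"
  shows "nqueries D m / (real m)\<^sup>2 * ((1 + c)\<^sup>2 / (1 + c\<^sup>2)) * (D m)\<^sup>2
    \<le> 3 * (\<Sum>i<m. (1 - 2 * Qfun (zfun D m ua ub c i)) * zfun D m ua ub c i)"
proof -
  define K where "K = (1 + c)\<^sup>2 / (1 + c\<^sup>2)"
  define \<alpha> where "\<alpha> = sqrt (nqueries D m / (real m * (1 + c\<^sup>2)))"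
  define T where "T = \<alpha> * (1 + c) * D m"
  have z: "zfun D m ua ub c i = \<alpha> * (c * ua i - ub i)" for i
    by (simp add: zfun_def \<alpha>_def)
  have \<alpha>: "0 \<le> \<alpha>" "\<alpha>\<^sup>2 = nqueries D m / (real m * (1 + c\<^sup>2))"
    using nqueries_nonneg[of D m] by (simp_all add: \<alpha>_def add_pos_nonneg)
  have T: "0 \<le> T" "T\<^sup>2 = K * (nqueries D m / real m * (D m)\<^sup>2)"
    using \<alpha> assms(1,2)
    by (simp_all add: T_def K_def power_mult_distrib divide_inverse inverse_mult_distrib mult_ac)
  have "0 \<le> K"
    by (simp add: K_def)
  have "(1 + c)\<^sup>2 \<le> 2 * (1 + c\<^sup>2)"
    using zero_le_power2[of "1 - c"] by (simp add: power2_eq_square algebra_simps)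
  then have "K \<le> 2"
    by (simp add: K_def divide_le_eq add_pos_nonneg)
  then have "(2 * T)\<^sup>2 \<le> 4 * (2 * ((real m)\<^sup>2 / 8))"
    unfolding power_mult_distrib T(2) using assms(3) nqueries_nonneg[of D m]
    by (intro mult_left_mono mult_mono) (simp_all add: \<open>0 \<le> K\<close>)
  then have "(2 * T)\<^sup>2 \<le> (real m)\<^sup>2"
    by simp
  then have T_le_m: "2 * T \<le> real m"
    by (rule power2_le_imp_le) simp
  have T_le_sum: "T \<le> (\<Sum>i<m. \<bar>zfun D m ua ub c i\<bar>)"
    using mult_left_mono[OF envy_le_imp_sum_abs_ge[OF assms(4,5,1)] \<alpha>(1)]
    by (simp add: z T_def abs_mult sum_distrib_left \<alpha>(1) mult.assoc)
  have "nqueries D m / (real m)\<^sup>2 * K * (D m)\<^sup>2 = T\<^sup>2 / real m"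
    unfolding T(2) by (simp add: power2_eq_square divide_inverse inverse_mult_distrib mult_ac)
  also have "\<dots> \<le> (\<Sum>i<m. \<bar>zfun D m ua ub c i\<bar> * min \<bar>zfun D m ua ub c i\<bar> 1)"
    using sum_abs_mult_min_one_ge[of "{..<m}" T] T(1) T_le_m T_le_sum by simp
  also have "\<dots> \<le> 3 * (\<Sum>i<m. (1 - 2 * Qfun (zfun D m ua ub c i)) * zfun D m ua ub c i)"
    unfolding sum_distrib_left by (intro sum_mono one_minus_two_Qfun_mult_ge)
  finally show ?thesis
    unfolding K_def .
qed

theorem lemma12:
  fixes D :: "nat \<Rightarrow> real" and c :: real
  assumes D_lower: "\<forall>m. D m \<ge> root 4 (real m) * (ln (real m))\<^sup>2"
    and D_small: "D \<in> o(\<lambda>m. real m / ln (real m))"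
    and c_pos: "c > 0"
  shows "\<exists>M. \<forall>m \<ge> M. \<forall>ua ub :: nat \<Rightarrow> real.
           (\<forall>i<m. 0 \<le> ua i \<and> ua i \<le> 1 \<and> 0 \<le> ub i \<and> ub i \<le> 1)
         \<and> (\<exists>S \<subseteq> {..<m}. envy m ua ub S \<le> - D m)
         \<longrightarrow> (\<Sum>i<m. (1 - 2 * Qfun (zfun D m ua ub c i)) * zfun D m ua ub c i)
             \<ge> 0.21 * (nqueries D m / (real m)\<^sup>2) * ((1 + c)\<^sup>2 / (1 + c\<^sup>2)) * (D m)\<^sup>2"
proof -
  obtain M where M: "\<And>m. m \<ge> M \<Longrightarrow> nqueries D m / real m * (D m)\<^sup>2 \<le> (real m)\<^sup>2 / 8"
    using eventually_nqueries_mult_sq_le[OF D_small] unfolding eventually_sequentially by blast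
  \<comment> \<open>D_lower only serves to make D nonnegative\<close>
  have D_nonneg: "0 \<le> D m" for m
    using order_trans[OF _ spec[OF D_lower, of m]] by simp
  show ?thesis
  proof (intro exI allI impI)
    fix m ua ub
    assume "m \<ge> M" and "(\<forall>i<m. 0 \<le> ua i \<and> ua i \<le> 1 \<and> 0 \<le> ub i \<and> ub i \<le> 1)
      \<and> (\<exists>S \<subseteq> {..<m}. envy m ua ub S \<le> - D m)"
    then obtain S where S: "S \<subseteq> {..<m}" "envy m ua ub S \<le> - D m"
      by blast
    define X where "X = nqueries D m / (real m)\<^sup>2 * ((1 + c)\<^sup>2 / (1 + c\<^sup>2)) * (D m)\<^sup>2"
    have "X \<le> 3 * (\<Sum>i<m. (1 - 2 * Qfun (zfun D m ua ub c i)) * zfun D m ua ub c i)"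
      unfolding X_def using sum_one_minus_two_Qfun_mult_ge c_pos D_nonneg M[OF \<open>m \<ge> M\<close>] S by simp
    moreover have "0 \<le> X"
      using nqueries_nonneg[of D m] by (simp add: X_def)
    ultimately have "21 / 100 * X \<le> (\<Sum>i<m. (1 - 2 * Qfun (zfun D m ua ub c i)) * zfun D m ua ub c i)"
      by linarith
    then show "(\<Sum>i<m. (1 - 2 * Qfun (zfun D m ua ub c i)) * zfun D m ua ub c i)
        \<ge> 0.21 * (nqueries D m / (real m)\<^sup>2) * ((1 + c)\<^sup>2 / (1 + c\<^sup>2)) * (D m)\<^sup>2"
      by (simp add: X_def mult.assoc)
  qed
qed

end
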